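(* Let $\lambda$ be a partition (respectively a strict partition) and let $c\ge1$. Then the number of pairs $(T,u)$, where $T$ is a standard Young tableau of shape $[\lambda]$ (respectively a shifted standard Young tableau of shape $[\lambda]^{\mathrm{sh}}$) and $(T,u)$ is a horizontal adjacency lying in column $c$, equals the number of standard Young tableaux of shape $[\lambda]$ (respectively shifted standard Young tableaux of shape $[\lambda]^{\mathrm{sh}}$) whose largest entry $|\lambda|$ lies in a column with index at least $c+1$.
   Context: Matrix coordinates (row $i$, column $j$). $[\lambda]=\{(i,j):i\in[\ell(\lambda)],j\in[\lambda_i]\}$; for strict $\lambda$, $[\lambda]^{\mathrm{sh}}=\{(i,j+i-1):i\in[\ell(\lambda)],j\in[\lambda_i]\}$. A (shifted) standard Young tableau is a bijection from the cell set $D$ to $[|\lambda|]$ increasing along rows (left to right) and columns (top to bottom). For such $T$ and $u=(i,j)\in D$, $(T,u)$ is a horizontal adjacency if $(i,j+1)\in D$ and $T(i,j+1)=T(u)+1$; it lies in column $j$ (and row $i$). *)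

theory Defs
  imports Main
begin

(* Cells are (row, column), both 1-indexed (matrix coordinates). *)

definition partition :: "nat list \<Rightarrow> bool" where
  "partition lam \<longleftrightarrow> sorted_wrt (\<ge>) lam \<and> (\<forall>x\<in>set lam. 0 < x)"

definition strict_partition :: "nat list \<Rightarrow> bool" where
  "strict_partition lam \<longleftrightarrow> sorted_wrt (>) lam \<and> (\<forall>x\<in>set lam. 0 < x)"

definition size_part :: "nat list \<Rightarrow> nat" where
  "size_part lam = sum_list lam"

definition young_diagram :: "nat list \<Rightarrow> (nat \<times> nat) set" where
  "young_diagram lam = {(i, j). 1 \<le> i \<and> i \<le> length lam \<and> 1 \<le> j \<and> j \<le> lam ! (i - 1)}"

definition shifted_diagram :: "nat list \<Rightarrow> (nat \<times> nat) set" where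
  "shifted_diagram lam = {(i, j + i - 1) | i j. 1 \<le> i \<and> i \<le> length lam \<and> 1 \<le> j \<and> j \<le> lam ! (i - 1)}"

(* To make the set of tableaux a set of
   functions, T is required to be 0 outside D. *)
definition standard_tableau :: "(nat \<times> nat) set \<Rightarrow> nat \<Rightarrow> (nat \<times> nat \<Rightarrow> nat) \<Rightarrow> bool" where
  "standard_tableau D n T \<longleftrightarrow>
     bij_betw T D {1..n} \<and> (\<forall>u. u \<notin> D \<longrightarrow> T u = 0) \<and>
     (\<forall>i j. (i, j) \<in> D \<and> (i, j + 1) \<in> D \<longrightarrow> T (i, j) < T (i, j + 1)) \<and>
     (\<forall>i j. (i, j) \<in> D \<and> (i + 1, j) \<in> D \<longrightarrow> T (i, j) < T (i + 1, j))"

definition horiz_adj :: "(nat \<times> nat) set \<Rightarrow> (nat \<times> nat \<Rightarrow> nat) \<Rightarrow> nat \<times> nat \<Rightarrow> bool" where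
  "horiz_adj D T u \<longleftrightarrow> u \<in> D \<and> (fst u, snd u + 1) \<in> D \<and> T (fst u, snd u + 1) = T u + 1"

end

theory Submission
  imports Defs "HOL-Combinatorics.Transposition"
begin

text \<open>
  Let \<open>N = |D|\<close> and call an entry late if it lies in a column beyond \<open>c\<close>. For every finite
  cell set \<open>D\<close> we show \<open>#{T : N late} = #{adjacencies in column c} + #{T : 1 late}\<close> by induction
  on \<open>N\<close>. Exchanging the entries \<open>N - 1\<close> and \<open>N\<close> matches the tableaux in which \<open>N\<close> is late and
  \<open>N - 1\<close> is not with those in which \<open>N - 1\<close> is late and \<open>N\<close> is not, except when \<open>N - 1, N\<close> is a
  horizontal adjacency in column \<open>c\<close>, where the exchange would break the row. Hence
  \<open>#{N late} = #{N - 1 late} + #{N - 1, N adjacent in column c}\<close>. Removing \<open>N\<close>, which sits at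
  a corner, splits the remaining counts into sums over corners, and the induction hypothesis turns
  \<open>#{N - 1 late}\<close> into the adjacencies not involving \<open>N\<close> plus \<open>#{1 late}\<close>. In a (shifted) Young
  diagram every cell outside column 1 has a left or upper neighbour, so the entry 1 is never late.
\<close>

type_synonym cell = "nat \<times> nat"
type_synonym tableau = "cell \<Rightarrow> nat"

context
  fixes D :: "cell set" and n :: nat and T :: tableau
  assumes tableau: "standard_tableau D n T"
begin

lemma standard_tableau_bij: "bij_betw T D {1..n}"
  using tableau by (simp add: standard_tableau_def)

lemma standard_tableau_finite: "finite D"
  using bij_betw_finite[OF standard_tableau_bij] by simp

lemma standard_tableau_card: "card D = n"
  using bij_betw_same_card[OF standard_tableau_bij] by simp

lemma standard_tableau_range: "u \<in> D \<Longrightarrow> 1 \<le> T u \<and> T u \<le> n"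
  using bij_betw_apply[OF standard_tableau_bij] by auto

lemma standard_tableau_inj: "u \<in> D \<Longrightarrow> v \<in> D \<Longrightarrow> T u = T v \<Longrightarrow> u = v"
  using standard_tableau_bij by (auto simp: bij_betw_def inj_on_def)

lemma standard_tableau_surj: "1 \<le> k \<Longrightarrow> k \<le> n \<Longrightarrow> \<exists>u\<in>D. T u = k"
  using standard_tableau_bij by (metis atLeastAtMost_iff bij_betw_def imageE)

lemma standard_tableau_outside: "u \<notin> D \<Longrightarrow> T u = 0"
  using tableau unfolding standard_tableau_def by blast

lemma standard_tableau_row_less: "(i, j) \<in> D \<Longrightarrow> (i, j + 1) \<in> D \<Longrightarrow> T (i, j) < T (i, j + 1)"
  using tableau by (simp add: standard_tableau_def)

lemma standard_tableau_column_less: "(i, j) \<in> D \<Longrightarrow> (i + 1, j) \<in> D \<Longrightarrow> T (i, j) < T (i + 1, j)"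
  using tableau by (simp add: standard_tableau_def)

end

lemma finite_standard_tableaux:
  assumes "finite D"
  shows "finite {T. standard_tableau D n T}"
  by (rule finite_subset[OF _ finite_set_of_finite_funs[OF assms, of "{1..n}" 0]])
    (auto dest: standard_tableau_range standard_tableau_outside)

definition corners :: "cell set \<Rightarrow> cell set" where
  "corners D = {x \<in> D. (fst x, snd x + 1) \<notin> D \<and> (fst x + 1, snd x) \<notin> D}"

lemma standard_tableau_max_in_corners:
  assumes tableau: "standard_tableau D n T" and x: "x \<in> D" "T x = n"
  shows "x \<in> corners D"
  using x standard_tableau_row_less[OF tableau, of "fst x" "snd x"]
    standard_tableau_column_less[OF tableau, of "fst x" "snd x"]
    standard_tableau_range[OF tableau, of "(fst x, snd x + 1)"]
    standard_tableau_range[OF tableau, of "(fst x + 1, snd x)"]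
  by (auto simp: corners_def)

lemma standard_tableau_remove_max:
  assumes tableau: "standard_tableau D (Suc m) T" and x: "x \<in> D" "T x = Suc m"
  shows "standard_tableau (D - {x}) m (T(x := 0))"
proof -
  have "bij_betw T (D - {x}) ({1..Suc m} - {Suc m})"
    using bij_betw_DiffI[OF standard_tableau_bij[OF tableau], of "{x}" "{Suc m}"] x by auto
  moreover have "{1..Suc m} - {Suc m} = {1..m}"
    by auto
  ultimately have "bij_betw (T(x := 0)) (D - {x}) {1..m}"
    by (subst bij_betw_cong[of _ _ T]) auto
  then show ?thesis
    using standard_tableau_outside[OF tableau] standard_tableau_row_less[OF tableau]
      standard_tableau_column_less[OF tableau]
    by (auto simp: standard_tableau_def)
qed

lemma standard_tableau_extend_corner:
  assumes tableau: "standard_tableau (D - {x}) m T" and x: "x \<in> corners D"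
  shows "standard_tableau D (Suc m) (T(x := Suc m))"
proof -
  have "bij_betw (T(x := Suc m)) (D - {x}) {1..m}"
    using standard_tableau_bij[OF tableau] by (subst bij_betw_cong[of _ _ T]) auto
  then have "bij_betw (T(x := Suc m)) ((D - {x}) \<union> {x}) ({1..m} \<union> {Suc m})"
    by (rule bij_betw_combine) auto
  moreover have "(D - {x}) \<union> {x} = D" "{1..m} \<union> {Suc m} = {1..Suc m}"
    using x by (auto simp: corners_def)
  moreover have "\<And>u. u \<in> D - {x} \<Longrightarrow> T u < Suc m"
    using standard_tableau_range[OF tableau] by (simp add: less_Suc_eq_le)
  ultimately show ?thesis
    using x standard_tableau_outside[OF tableau] standard_tableau_row_less[OF tableau]
      standard_tableau_column_less[OF tableau]
    by (auto simp: standard_tableau_def corners_def)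
qed

lemma sum_standard_tableaux_by_max_corner:
  assumes "finite D"
  shows "(\<Sum>T | standard_tableau D (Suc m) T. f T)
       = (\<Sum>x\<in>corners D. \<Sum>T | standard_tableau (D - {x}) m T. f (T(x := Suc m)))"
proof -
  define S where "S x = {T. standard_tableau (D - {x}) m T}" for x
  let ?extend = "\<lambda>x T. T(x := Suc m)"
  have tableaux_eq: "{T. standard_tableau D (Suc m) T} = (\<Union>x\<in>corners D. ?extend x ` S x)"
  proof (intro equalityI subsetI)
    fix T assume "T \<in> {T. standard_tableau D (Suc m) T}"
    then have tableau: "standard_tableau D (Suc m) T" by simp
    then obtain x where x: "x \<in> D" "T x = Suc m"
      using standard_tableau_surj[OF tableau, of "Suc m"] by auto
    then have "T(x := 0) \<in> S x" "T = ?extend x (T(x := 0))"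
      using standard_tableau_remove_max[OF tableau x] by (auto simp: S_def)
    then show "T \<in> (\<Union>x\<in>corners D. ?extend x ` S x)"
      using standard_tableau_max_in_corners[OF tableau x] by blast
  next
    fix T assume "T \<in> (\<Union>x\<in>corners D. ?extend x ` S x)"
    then show "T \<in> {T. standard_tableau D (Suc m) T}"
      using standard_tableau_extend_corner unfolding S_def by blast
  qed
  have inj: "inj_on (?extend x) (S x)" if "x \<in> corners D" for x
  proof (rule inj_onI)
    fix T T' assume "T \<in> S x" "T' \<in> S x" and extend_eq: "?extend x T = ?extend x T'"
    then have "T x = 0" "T' x = 0"
      unfolding S_def using standard_tableau_outside by blast+
    then show "T = T'"
      using extend_eq by (metis fun_upd_triv fun_upd_upd)
  qed
  have disjoint: "?extend x ` S x \<inter> ?extend y ` S y = {}"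
    if xy: "x \<in> corners D" "y \<in> corners D" "x \<noteq> y" for x y
  proof -
    have "T \<notin> ?extend y ` S y" if "T \<in> ?extend x ` S x" for T
    proof
      assume "T \<in> ?extend y ` S y"
      then have "T y = Suc m" by auto
      moreover have "T x = Suc m" "standard_tableau D (Suc m) T"
        using \<open>T \<in> ?extend x ` S x\<close> standard_tableau_extend_corner[OF _ \<open>x \<in> corners D\<close>]
        unfolding S_def by auto
      ultimately show False
        using standard_tableau_inj[of D "Suc m" T x y] xy by (simp add: corners_def)
    qed
    then show ?thesis
      by blast
  qed
  have "finite (corners D)" "\<And>x. finite (S x)"
    using assms finite_standard_tableaux by (auto simp: corners_def S_def)
  then have "(\<Sum>T | standard_tableau D (Suc m) T. f T) = (\<Sum>x\<in>corners D. sum f (?extend x ` S x))"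
    unfolding tableaux_eq using disjoint by (intro sum.UNION_disjoint) auto
  also have "\<dots> = (\<Sum>x\<in>corners D. \<Sum>T\<in>S x. f (T(x := Suc m)))"
    by (rule sum.cong[OF refl]) (simp add: sum.reindex[OF inj] comp_def)
  finally show ?thesis
    unfolding S_def .
qed

lemma card_standard_tableaux_by_max_corner:
  assumes "finite D"
  shows "card {T. standard_tableau D (Suc m) T \<and> P T}
       = (\<Sum>x\<in>corners D. card {T. standard_tableau (D - {x}) m T \<and> P (T(x := Suc m))})"
proof -
  have count: "card {T. standard_tableau E k T \<and> Q T} = (\<Sum>T | standard_tableau E k T. if Q T then 1 else 0)"
    if "finite E" for E k Q
  proof -
    have "card {T. standard_tableau E k T \<and> Q T} = (\<Sum>T \<in> {T \<in> {T. standard_tableau E k T}. Q T}. 1)"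
      by simp
    also have "\<dots> = (\<Sum>T | standard_tableau E k T. if Q T then 1 else 0)"
      by (rule sum.inter_filter[OF finite_standard_tableaux[OF that]])
    finally show ?thesis .
  qed
  have "card {T. standard_tableau D (Suc m) T \<and> P T}
      = (\<Sum>T | standard_tableau D (Suc m) T. if P T then 1 else 0)"
    by (rule count[OF assms])
  also have "\<dots> = (\<Sum>x\<in>corners D. \<Sum>T | standard_tableau (D - {x}) m T. if P (T(x := Suc m)) then 1 else 0)"
    by (rule sum_standard_tableaux_by_max_corner[OF assms])
  also have "\<dots> = (\<Sum>x\<in>corners D. card {T. standard_tableau (D - {x}) m T \<and> P (T(x := Suc m))})"
    using assms by (simp add: count)
  finally show ?thesis .
qed

lemma card_tableau_pairs_by_max_corner:
  assumes "finite D" and cells: "\<And>T u. P T u \<Longrightarrow> u \<in> D"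
  shows "card {(T, u). standard_tableau D (Suc m) T \<and> P T u}
       = (\<Sum>x\<in>corners D. card {(T, u). standard_tableau (D - {x}) m T \<and> P (T(x := Suc m)) u})"
proof -
  have count: "card {(T, u). standard_tableau E k T \<and> Q T u}
      = (\<Sum>T | standard_tableau E k T. card {u. Q T u})"
    if "finite E" "\<And>T. finite {u. Q T u}" for E k Q
  proof -
    have "{(T, u). standard_tableau E k T \<and> Q T u} = (SIGMA T:{T. standard_tableau E k T}. {u. Q T u})"
      by auto
    then show ?thesis
      using that finite_standard_tableaux[OF that(1)] by simp
  qed
  have "finite {u. P T u}" for T
    using assms(1) by (rule rev_finite_subset) (use cells in blast)
  then show ?thesis
    using assms(1) by (simp add: count sum_standard_tableaux_by_max_corner)
qed

definition column_adjacencies :: "nat \<Rightarrow> cell set \<Rightarrow> nat \<Rightarrow> (tableau \<times> cell) set" where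
  "column_adjacencies c D n = {(T, u). standard_tableau D n T \<and> horiz_adj D T u \<and> snd u = c}"

definition entry_beyond_column :: "nat \<Rightarrow> cell set \<Rightarrow> nat \<Rightarrow> nat \<Rightarrow> tableau set" where
  "entry_beyond_column c D n k = {T. standard_tableau D n T \<and> (\<exists>u\<in>D. T u = k \<and> c + 1 \<le> snd u)}"

definition max_adjacency_tableaux :: "nat \<Rightarrow> cell set \<Rightarrow> nat \<Rightarrow> tableau set" where
  "max_adjacency_tableaux c D n = {T. \<exists>u. (T, u) \<in> column_adjacencies c D n \<and> T u + 1 = n}"

lemma card_entry_beyond_column_by_max_corner:
  assumes "finite D" "k \<le> n"
  shows "card (entry_beyond_column c D (Suc n) k)
       = (\<Sum>x\<in>corners D. card (entry_beyond_column c (D - {x}) n k))"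
  unfolding entry_beyond_column_def card_standard_tableaux_by_max_corner[OF assms(1)]
proof (rule sum.cong[OF refl], rule arg_cong[where f = card])
  fix x
  show "{T. standard_tableau (D - {x}) n T \<and> (\<exists>u\<in>D. (T(x := Suc n)) u = k \<and> c + 1 \<le> snd u)}
      = {T. standard_tableau (D - {x}) n T \<and> (\<exists>u\<in>D - {x}. T u = k \<and> c + 1 \<le> snd u)}"
    using assms(2) by force
qed

lemma horiz_adj_extend_corner_iff:
  assumes tableau: "standard_tableau (D - {x}) n T" and x: "x \<in> corners D"
  shows "horiz_adj D (T(x := Suc n)) u \<and> (T(x := Suc n)) u \<noteq> n \<longleftrightarrow> horiz_adj (D - {x}) T u"
proof
  assume adj: "horiz_adj D (T(x := Suc n)) u \<and> (T(x := Suc n)) u \<noteq> n"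
  then have "u \<noteq> x"
    using x by (auto simp: horiz_adj_def corners_def)
  moreover have "(fst u, snd u + 1) \<noteq> x"
    using adj \<open>u \<noteq> x\<close> by (auto simp: horiz_adj_def)
  ultimately show "horiz_adj (D - {x}) T u"
    using adj by (auto simp: horiz_adj_def)
next
  assume adj: "horiz_adj (D - {x}) T u"
  then have "T (fst u, snd u + 1) \<le> n"
    using standard_tableau_range[OF tableau, of "(fst u, snd u + 1)"] by (simp add: horiz_adj_def)
  then show "horiz_adj D (T(x := Suc n)) u \<and> (T(x := Suc n)) u \<noteq> n"
    using adj by (auto simp: horiz_adj_def)
qed

lemma card_column_adjacencies_by_max_corner:
  assumes "finite D"
  shows "card {(T, u). (T, u) \<in> column_adjacencies c D (Suc n) \<and> T u \<noteq> n}
       = (\<Sum>x\<in>corners D. card (column_adjacencies c (D - {x}) n))"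
proof -
  have "card {(T, u). (T, u) \<in> column_adjacencies c D (Suc n) \<and> T u \<noteq> n}
      = card {(T, u). standard_tableau D (Suc n) T \<and> (horiz_adj D T u \<and> T u \<noteq> n) \<and> snd u = c}"
    unfolding column_adjacencies_def by (rule arg_cong[where f = card]) auto
  also have "\<dots> = (\<Sum>x\<in>corners D. card {(T, u). standard_tableau (D - {x}) n T
      \<and> (horiz_adj D (T(x := Suc n)) u \<and> (T(x := Suc n)) u \<noteq> n) \<and> snd u = c})"
    by (rule card_tableau_pairs_by_max_corner[OF assms]) (simp add: horiz_adj_def)
  also have "\<dots> = (\<Sum>x\<in>corners D. card (column_adjacencies c (D - {x}) n))"
    unfolding column_adjacencies_def using horiz_adj_extend_corner_iff
    by (intro sum.cong refl arg_cong[where f = card]) blast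
  finally show ?thesis .
qed

lemma card_column_adjacencies_split_max:
  assumes "finite D"
  shows "card (column_adjacencies c D (Suc n))
       = card {(T, u). (T, u) \<in> column_adjacencies c D (Suc n) \<and> T u \<noteq> n}
         + card (max_adjacency_tableaux c D (Suc n))"
proof -
  define A where "A = column_adjacencies c D (Suc n)"
  define A' where "A' = {(T, u). (T, u) \<in> A \<and> T u \<noteq> n}"
  define M where "M = {(T, u). (T, u) \<in> A \<and> T u = n}"
  have "A \<subseteq> {T. standard_tableau D (Suc n) T} \<times> D"
    by (auto simp: A_def column_adjacencies_def horiz_adj_def)
  then have "finite A"
    using finite_standard_tableaux[OF assms] assms by (simp add: finite_subset)
  moreover have "A = A' \<union> M" "A' \<inter> M = {}"
    by (auto simp: A'_def M_def)
  ultimately have "card A = card A' + card M"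
    by (simp add: card_Un_disjoint)
  have "inj_on fst M"
  proof (rule inj_onI)
    fix p q assume pq: "p \<in> M" "q \<in> M" "fst p = fst q"
    obtain T u T' u' where p: "p = (T, u)" and q: "q = (T', u')"
      by (cases p, cases q) blast
    have "(T, u) \<in> M" "(T', u') \<in> M" "T' = T"
      using pq unfolding p q by simp_all
    then have "standard_tableau D (Suc n) T" "u \<in> D" "u' \<in> D" "T u = T u'"
      by (simp_all add: M_def A_def column_adjacencies_def horiz_adj_def)
    then have "u = u'"
      by (rule standard_tableau_inj)
    with pq(3) show "p = q"
      unfolding p q by simp
  qed
  then have "card M = card (fst ` M)"
    by (rule card_image[symmetric])
  also have "fst ` M = max_adjacency_tableaux c D (Suc n)"
    by (force simp: M_def A_def max_adjacency_tableaux_def)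
  finally have "card M = card (max_adjacency_tableaux c D (Suc n))" .
  with \<open>card A = card A' + card M\<close> show ?thesis
    unfolding A_def A'_def by simp
qed

lemma transpose_Suc_less:
  fixes a b k :: nat
  assumes "a < b" "(a, b) \<noteq> (k, Suc k)"
  shows "transpose k (Suc k) a < transpose k (Suc k) b"
  using assms by (auto simp: transpose_def)

lemma standard_tableau_transpose:
  assumes tableau: "standard_tableau D n T" and "1 \<le> k"
    and not_right: "\<And>i j. (i, j) \<in> D \<Longrightarrow> (i, j + 1) \<in> D \<Longrightarrow> \<not> (T (i, j) = k \<and> T (i, j + 1) = Suc k)"
    and not_below: "\<And>i j. (i, j) \<in> D \<Longrightarrow> (i + 1, j) \<in> D \<Longrightarrow> \<not> (T (i, j) = k \<and> T (i + 1, j) = Suc k)"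
    and "Suc k \<le> n"
  shows "standard_tableau D n (transpose k (Suc k) \<circ> T)"
proof -
  have "bij_betw (transpose k (Suc k)) {1..n} {1..n}"
    using assms by simp
  then have "bij_betw (transpose k (Suc k) \<circ> T) D {1..n}"
    using standard_tableau_bij[OF tableau] by (rule bij_betw_trans[rotated])
  then show ?thesis
    using assms standard_tableau_outside[OF tableau]
      standard_tableau_row_less[OF tableau] standard_tableau_column_less[OF tableau]
    by (auto simp: standard_tableau_def intro!: transpose_Suc_less)
qed

lemma transpose_max_out_of_late_columns:
  assumes T: "T \<in> entry_beyond_column c D (Suc n) (Suc n) - entry_beyond_column c D (Suc n) n
      - max_adjacency_tableaux c D (Suc n)"
    and "0 < n"
  shows "transpose n (Suc n) \<circ> T \<in> entry_beyond_column c D (Suc n) n - entry_beyond_column c D (Suc n) (Suc n)"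
proof -
  obtain q where tableau: "standard_tableau D (Suc n) T" and q: "q \<in> D" "T q = Suc n" "c + 1 \<le> snd q"
    using T by (auto simp: entry_beyond_column_def)
  have early: "snd v \<le> c" if "v \<in> D" "T v = n" for v
    using T tableau that by (force simp: entry_beyond_column_def)
  have at_q: "v = q" if "v \<in> D" "T v = Suc n" for v
    using standard_tableau_inj[OF tableau] q that by metis
  have "standard_tableau D (Suc n) (transpose n (Suc n) \<circ> T)"
  proof (rule standard_tableau_transpose[OF tableau])
    fix i j assume cells: "(i, j) \<in> D" "(i, j + 1) \<in> D"
    show "\<not> (T (i, j) = n \<and> T (i, j + 1) = Suc n)"
    proof
      assume adj: "T (i, j) = n \<and> T (i, j + 1) = Suc n"
      then have "j = c"
        using early[of "(i, j)"] at_q[of "(i, j + 1)"] cells q by auto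
      then have "T \<in> max_adjacency_tableaux c D (Suc n)"
        using tableau cells adj
        by (auto simp: max_adjacency_tableaux_def column_adjacencies_def horiz_adj_def)
      then show False
        using T by simp
    qed
  next
    fix i j assume cells: "(i, j) \<in> D" "(i + 1, j) \<in> D"
    show "\<not> (T (i, j) = n \<and> T (i + 1, j) = Suc n)"
      using early[of "(i, j)"] at_q[of "(i + 1, j)"] cells q by auto
  qed (use assms in auto)
  then show ?thesis
    using q early by (fastforce simp: entry_beyond_column_def transpose_eq_iff)
qed

lemma transpose_max_into_late_columns:
  assumes T: "T \<in> entry_beyond_column c D (Suc n) n - entry_beyond_column c D (Suc n) (Suc n)"
    and "0 < n"
  shows "transpose n (Suc n) \<circ> T \<in> entry_beyond_column c D (Suc n) (Suc n) - entry_beyond_column c D (Suc n) n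
      - max_adjacency_tableaux c D (Suc n)"
proof -
  obtain q where tableau: "standard_tableau D (Suc n) T" and q: "q \<in> D" "T q = n" "c + 1 \<le> snd q"
    using T by (auto simp: entry_beyond_column_def)
  have early: "snd v \<le> c" if "v \<in> D" "T v = Suc n" for v
    using T tableau that by (force simp: entry_beyond_column_def)
  have at_q: "v = q" if "v \<in> D" "T v = n" for v
    using standard_tableau_inj[OF tableau] q that by metis
  have "standard_tableau D (Suc n) (transpose n (Suc n) \<circ> T)"
  proof (rule standard_tableau_transpose[OF tableau])
    fix i j assume cells: "(i, j) \<in> D" "(i, j + 1) \<in> D"
    show "\<not> (T (i, j) = n \<and> T (i, j + 1) = Suc n)"
      using early[of "(i, j + 1)"] at_q[of "(i, j)"] cells q by auto
  next
    fix i j assume cells: "(i, j) \<in> D" "(i + 1, j) \<in> D"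
    show "\<not> (T (i, j) = n \<and> T (i + 1, j) = Suc n)"
      using early[of "(i + 1, j)"] at_q[of "(i, j)"] cells q by auto
  qed (use assms in auto)
  moreover have "transpose n (Suc n) \<circ> T \<notin> max_adjacency_tableaux c D (Suc n)"
    using standard_tableau_row_less[OF tableau]
    by (force simp: max_adjacency_tableaux_def column_adjacencies_def horiz_adj_def transpose_eq_iff)
  ultimately show ?thesis
    using q early by (fastforce simp: entry_beyond_column_def transpose_eq_iff)
qed

lemma card_max_beyond_column_by_transpose:
  assumes "finite D" "0 < n"
  shows "card (entry_beyond_column c D (Suc n) (Suc n))
       = card (entry_beyond_column c D (Suc n) n) + card (max_adjacency_tableaux c D (Suc n))"
proof -
  define B where "B = entry_beyond_column c D (Suc n) (Suc n)"
  define B' where "B' = entry_beyond_column c D (Suc n) n"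
  define J where "J = max_adjacency_tableaux c D (Suc n)"
  have finite: "finite B" "finite B'"
    using finite_standard_tableaux[OF assms(1)]
    by (auto simp: B_def B'_def entry_beyond_column_def intro: rev_finite_subset)
  have "J \<subseteq> B - B'"
  proof
    fix T assume "T \<in> J"
    then obtain u where tableau: "standard_tableau D (Suc n) T" and u: "u \<in> D" "T u = n" "snd u = c"
      and right: "(fst u, snd u + 1) \<in> D" "T (fst u, snd u + 1) = Suc n"
      by (auto simp: J_def max_adjacency_tableaux_def column_adjacencies_def horiz_adj_def)
    have "T \<in> B"
      unfolding B_def entry_beyond_column_def using tableau right u(3)
      by (intro CollectI conjI bexI[of _ "(fst u, snd u + 1)"]) auto
    moreover have "T \<notin> B'"
    proof
      assume "T \<in> B'"
      then obtain v where "v \<in> D" "T v = n" "c + 1 \<le> snd v"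
        by (auto simp: B'_def entry_beyond_column_def)
      then show False
        using standard_tableau_inj[OF tableau, of v u] u by simp
    qed
    ultimately show "T \<in> B - B'"
      by simp
  qed
  have "bij_betw (\<lambda>T. transpose n (Suc n) \<circ> T) (B - B' - J) (B' - B)"
  proof (rule bij_betw_byWitness[where f' = "\<lambda>T. transpose n (Suc n) \<circ> T"])
    show "\<forall>T\<in>B - B' - J. transpose n (Suc n) \<circ> (transpose n (Suc n) \<circ> T) = T"
      "\<forall>T\<in>B' - B. transpose n (Suc n) \<circ> (transpose n (Suc n) \<circ> T) = T"
      by (simp_all add: fun_eq_iff)
    show "(\<lambda>T. transpose n (Suc n) \<circ> T) ` (B - B' - J) \<subseteq> B' - B"
      using transpose_max_out_of_late_columns[OF _ assms(2)] unfolding B_def B'_def J_def by blast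
    show "(\<lambda>T. transpose n (Suc n) \<circ> T) ` (B' - B) \<subseteq> B - B' - J"
      using transpose_max_into_late_columns[OF _ assms(2)] unfolding B_def B'_def J_def by blast
  qed
  then have "card (B - B' - J) = card (B' - B)"
    by (rule bij_betw_same_card)
  moreover have "card (B - B') = card (B - B' - J) + card J"
    using \<open>J \<subseteq> B - B'\<close> finite by (metis card_Diff_subset card_mono finite_Diff finite_subset le_add_diff_inverse2)
  moreover have "card B = card (B \<inter> B') + card (B - B')" "card B' = card (B' \<inter> B) + card (B' - B)"
    using finite by (metis card_Int_Diff)+
  ultimately show ?thesis
    unfolding B_def [symmetric] B'_def [symmetric] J_def [symmetric] by (simp add: Int_commute)
qed

lemma card_max_beyond_column_decomposition:
  assumes "finite D" "card D = n"
  shows "card (entry_beyond_column c D n n)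
       = card (column_adjacencies c D n) + card (entry_beyond_column c D n 1)"
  using assms
proof (induction n arbitrary: D rule: less_induct)
  case (less n D)
  consider "n = 0" | "n = 1" | m where "n = Suc (Suc m)"
    by (metis One_nat_def not0_implies_Suc)
  then show ?case
  proof cases
    case 1
    then have "D = {}"
      using less.prems by simp
    then show ?thesis
      by (simp add: column_adjacencies_def entry_beyond_column_def horiz_adj_def)
  next
    case 2
    then have "column_adjacencies c D n = {}"
      using less.prems by (auto simp: card_Suc_eq column_adjacencies_def horiz_adj_def)
    then show ?thesis
      using 2 by simp
  next
    case (3 m)
    have finite: "finite D"
      using less.prems by simp
    have IH: "card (entry_beyond_column c (D - {x}) (Suc m) (Suc m))
        = card (column_adjacencies c (D - {x}) (Suc m)) + card (entry_beyond_column c (D - {x}) (Suc m) 1)"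
      if "x \<in> corners D" for x
      using less.IH[of "Suc m" "D - {x}"] less.prems 3 that by (auto simp: corners_def)
    have "card (entry_beyond_column c D n (Suc m))
        = (\<Sum>x\<in>corners D. card (entry_beyond_column c (D - {x}) (Suc m) (Suc m)))"
      unfolding 3 by (rule card_entry_beyond_column_by_max_corner[OF finite]) simp
    also have "\<dots> = (\<Sum>x\<in>corners D. card (column_adjacencies c (D - {x}) (Suc m)))
        + (\<Sum>x\<in>corners D. card (entry_beyond_column c (D - {x}) (Suc m) 1))"
      using IH by (simp add: sum.distrib)
    also have "\<dots> = card {(T, u). (T, u) \<in> column_adjacencies c D n \<and> T u \<noteq> Suc m}
        + card (entry_beyond_column c D n 1)"
      unfolding 3 card_column_adjacencies_by_max_corner[OF finite]
      by (simp add: card_entry_beyond_column_by_max_corner[OF finite])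
    finally show ?thesis
      using card_max_beyond_column_by_transpose[OF finite, of "Suc m" c]
        card_column_adjacencies_split_max[OF finite, of c "Suc m"]
      unfolding 3 by simp
  qed
qed

definition cells_have_left_or_upper_neighbour :: "cell set \<Rightarrow> bool" where
  "cells_have_left_or_upper_neighbour D \<longleftrightarrow>
     (\<forall>i j. (i, j) \<in> D \<longrightarrow> 2 \<le> j \<longrightarrow> (i, j - 1) \<in> D \<or> (2 \<le> i \<and> (i - 1, j) \<in> D))"

lemma entry_one_beyond_column_empty:
  assumes neighbour: "cells_have_left_or_upper_neighbour D" and "1 \<le> c"
  shows "entry_beyond_column c D n 1 = {}"
proof (rule ccontr)
  assume "entry_beyond_column c D n 1 \<noteq> {}"
  then obtain T i j where tableau: "standard_tableau D n T" and cell: "(i, j) \<in> D" "T (i, j) = 1" "2 \<le> j"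
    using \<open>1 \<le> c\<close> by (auto simp: entry_beyond_column_def)
  then consider "(i, j - 1) \<in> D" | "2 \<le> i" "(i - 1, j) \<in> D"
    using neighbour by (auto simp: cells_have_left_or_upper_neighbour_def)
  then show False
  proof cases
    case 1
    then show False
      using standard_tableau_row_less[OF tableau 1] standard_tableau_range[OF tableau 1] cell by simp
  next
    case 2
    then show False
      using standard_tableau_column_less[OF tableau 2(2)] standard_tableau_range[OF tableau 2(2)] cell by simp
  qed
qed

lemma card_column_adjacencies_eq_card_max_beyond_column:
  assumes "cells_have_left_or_upper_neighbour D" and "1 \<le> c"
  shows "card (column_adjacencies c D n) = card (entry_beyond_column c D n n)"
proof (cases "finite D \<and> card D = n")
  case True
  then show ?thesis
    using card_max_beyond_column_decomposition[of D n c] entry_one_beyond_column_empty[OF assms] by simp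
next
  case False
  then have "column_adjacencies c D n = {}" "entry_beyond_column c D n n = {}"
    using standard_tableau_finite standard_tableau_card
    by (auto simp: column_adjacencies_def entry_beyond_column_def)
  then show ?thesis
    by simp
qed

lemma young_diagram_left_or_upper_neighbour:
  "cells_have_left_or_upper_neighbour (young_diagram lam)"
  by (auto simp: cells_have_left_or_upper_neighbour_def young_diagram_def)

lemma shifted_diagram_left_or_upper_neighbour:
  assumes strict: "strict_partition lam"
  shows "cells_have_left_or_upper_neighbour (shifted_diagram lam)"
  unfolding cells_have_left_or_upper_neighbour_def
proof (intro allI impI)
  fix i j assume "(i, j) \<in> shifted_diagram lam" "2 \<le> j"
  then obtain k where k: "j = k + i - 1" "1 \<le> i" "i \<le> length lam" "1 \<le> k" "k \<le> lam ! (i - 1)"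
    by (auto simp: shifted_diagram_def)
  show "(i, j - 1) \<in> shifted_diagram lam \<or> (2 \<le> i \<and> (i - 1, j) \<in> shifted_diagram lam)"
  proof (cases "2 \<le> k")
    case True
    then have "(i, (k - 1) + i - 1) \<in> shifted_diagram lam"
      unfolding shifted_diagram_def using k by (intro CollectI exI[of _ i] exI[of _ "k - 1"]) auto
    then show ?thesis
      using k True by (simp add: add.commute)
  next
    case False
    then have "k = 1" "2 \<le> i"
      using k \<open>2 \<le> j\<close> by simp_all
    have "lam ! (i - 1) < lam ! (i - 2)"
      using strict \<open>2 \<le> i\<close> k(3) unfolding strict_partition_def by (simp add: sorted_wrt_iff_nth_less)
    then have "2 \<le> lam ! ((i - 1) - 1)"
      using k by (simp add: numeral_2_eq_2)
    then have "(i - 1, 2 + (i - 1) - 1) \<in> shifted_diagram lam"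
      unfolding shifted_diagram_def using \<open>2 \<le> i\<close> k(3)
      by (intro CollectI exI[of _ "i - 1"] exI[of _ 2]) auto
    then show ?thesis
      using k \<open>k = 1\<close> \<open>2 \<le> i\<close> by simp
  qed
qed

theorem mainTheorem11:
  fixes lam :: "nat list" and c :: nat
  assumes "c \<ge> 1"
  shows "(partition lam \<longrightarrow>
           card {(T, u). standard_tableau (young_diagram lam) (size_part lam) T
                         \<and> horiz_adj (young_diagram lam) T u \<and> snd u = c}
         = card {T. standard_tableau (young_diagram lam) (size_part lam) T
                    \<and> (\<exists>u\<in>young_diagram lam. T u = size_part lam \<and> snd u \<ge> c + 1)})
       \<and> (strict_partition lam \<longrightarrow>
           card {(T, u). standard_tableau (shifted_diagram lam) (size_part lam) T
                         \<and> horiz_adj (shifted_diagram lam) T u \<and> snd u = c}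
         = card {T. standard_tableau (shifted_diagram lam) (size_part lam) T
                    \<and> (\<exists>u\<in>shifted_diagram lam. T u = size_part lam \<and> snd u \<ge> c + 1)})"
  using card_column_adjacencies_eq_card_max_beyond_column[OF young_diagram_left_or_upper_neighbour assms]
    card_column_adjacencies_eq_card_max_beyond_column[OF shifted_diagram_left_or_upper_neighbour assms]
  unfolding column_adjacencies_def entry_beyond_column_def by blast

end
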